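(* Fix finite $\mathcal{S}$, $\mathcal{A}$, $d_0\in\Delta(\mathcal{S})$, $\gamma\in[0,1)$, a reward $\mathcal{R}:\mathcal{S}\times\mathcal{A}\to[0,1]$, and transition models $\mathcal{T},\mathcal{T}'$ with $\delta=\frac12\max_{s,a}\|\mathcal{T}(\cdot\mid s,a)-\mathcal{T}'(\cdot\mid s,a)\|_1>0$. For any $\varepsilon>0$, if $1/(1-\gamma)<\sqrt{\varepsilon/\delta}$, then $(\mathcal{T},\mathcal{T}')$ is $\varepsilon$-unexploitable relative to every policy set and the task $(\mathcal{S},\mathcal{A},\_,d_0,\mathcal{R},\gamma)$.
   Context: For a transition model $\mathcal{T}$ and policy $\pi$ (stationary, or non-stationary $\pi=(\pi_0,\pi_1,\dots)$), $J_{\mathcal{T}}(\pi)=\mathbb{E}\big[\sum_{t\ge0}\gamma^t\mathcal{R}(s_t,a_t)\big]$ with $s_0\sim d_0$, $a_t\sim\pi_t(\cdot\mid s_t)$, $s_{t+1}\sim\mathcal{T}(\cdot\mid s_t,a_t)$. A task is an MDP without transition model; a policy set is any set of such policies. $(\mathcal{T},\mathcal{T}')$ is $\varepsilon$-exploitable relative to $\Pi$ if there exist $\pi,\pi'\in\Pi$ with $J_{\mathcal{T}}(\pi)-J_{\mathcal{T}}(\pi')>\varepsilon$ and $J_{\mathcal{T}'}(\pi')-J_{\mathcal{T}'}(\pi)>\varepsilon$; otherwise $\varepsilon$-unexploitable. *)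

theory Defs
  imports "HOL-Analysis.Analysis"
begin

text \<open>A transition model T s a s' = T(s' | s, a).
  A (possibly non-stationary) policy p t s a = p_t(a | s); stationary policies are
  the special case where p does not depend on t.\<close>

definition is_dist :: "('x::finite \<Rightarrow> real) \<Rightarrow> bool" where
  "is_dist p \<longleftrightarrow> (\<forall>x. 0 \<le> p x) \<and> (\<Sum>x\<in>UNIV. p x) = 1"

definition is_transition :: "('s::finite \<Rightarrow> 'a::finite \<Rightarrow> 's \<Rightarrow> real) \<Rightarrow> bool" where
  "is_transition T \<longleftrightarrow> (\<forall>s a. is_dist (T s a))"

definition is_policy :: "(nat \<Rightarrow> 's::finite \<Rightarrow> 'a::finite \<Rightarrow> real) \<Rightarrow> bool" where
  "is_policy p \<longleftrightarrow> (\<forall>t s. is_dist (p t s))"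

fun state_dist :: "('s::finite \<Rightarrow> real) \<Rightarrow> ('s \<Rightarrow> 'a::finite \<Rightarrow> 's \<Rightarrow> real)
    \<Rightarrow> (nat \<Rightarrow> 's \<Rightarrow> 'a \<Rightarrow> real) \<Rightarrow> nat \<Rightarrow> 's \<Rightarrow> real" where
  "state_dist d0 T p 0 = d0"
| "state_dist d0 T p (Suc t) =
     (\<lambda>s'. \<Sum>s\<in>UNIV. \<Sum>a\<in>UNIV. state_dist d0 T p t s * p t s a * T s a s')"

text \<open>J_T(p) = E[sum_t gamma^t R(s_t,a_t)], written via the time marginals.\<close>
definition J :: "('s::finite \<Rightarrow> real) \<Rightarrow> ('s \<Rightarrow> 'a::finite \<Rightarrow> real) \<Rightarrow> real
    \<Rightarrow> ('s \<Rightarrow> 'a \<Rightarrow> 's \<Rightarrow> real) \<Rightarrow> (nat \<Rightarrow> 's \<Rightarrow> 'a \<Rightarrow> real) \<Rightarrow> real" where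
  "J d0 R \<gamma> T p =
     (\<Sum>t. \<gamma> ^ t * (\<Sum>s\<in>UNIV. \<Sum>a\<in>UNIV. state_dist d0 T p t s * p t s a * R s a))"

definition exploitable :: "('s::finite \<Rightarrow> real) \<Rightarrow> ('s \<Rightarrow> 'a::finite \<Rightarrow> real) \<Rightarrow> real
    \<Rightarrow> real \<Rightarrow> (nat \<Rightarrow> 's \<Rightarrow> 'a \<Rightarrow> real) set
    \<Rightarrow> ('s \<Rightarrow> 'a \<Rightarrow> 's \<Rightarrow> real) \<Rightarrow> ('s \<Rightarrow> 'a \<Rightarrow> 's \<Rightarrow> real) \<Rightarrow> bool" where
  "exploitable d0 R \<gamma> \<epsilon> PS T T' \<longleftrightarrow>
     (\<exists>p\<in>PS. \<exists>p'\<in>PS. J d0 R \<gamma> T p - J d0 R \<gamma> T p' > \<epsilon>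
                        \<and> J d0 R \<gamma> T' p' - J d0 R \<gamma> T' p > \<epsilon>)"

definition unexploitable where
  "unexploitable d0 R \<gamma> \<epsilon> PS T T' \<longleftrightarrow> \<not> exploitable d0 R \<gamma> \<epsilon> PS T T'"

definition tv_gap :: "('s::finite \<Rightarrow> 'a::finite \<Rightarrow> 's \<Rightarrow> real) \<Rightarrow> ('s \<Rightarrow> 'a \<Rightarrow> 's \<Rightarrow> real) \<Rightarrow> real" where
  "tv_gap T T' = (1/2) * Max {(\<Sum>s'\<in>UNIV. \<bar>T s a s' - T' s a s'\<bar>) | s a. True}"

end

theory Submission
  imports Defs
begin

text \<open>Under a fixed policy, one step of the state marginal is a push-forward by a stochastic
  kernel, and swapping \<open>T\<close> for \<open>T'\<close> moves that kernel by at most \<open>2\<delta>\<close> in \<open>\<ell>\<^sub>1\<close>. Hence the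
  marginals at time \<open>t\<close> differ by at most \<open>2t\<delta>\<close> in \<open>\<ell>\<^sub>1\<close>, so the expected reward at time \<open>t\<close>
  (rewards in [0,1]) differs by at most \<open>t\<delta>\<close>, and summing against \<open>\<gamma>\<^sup>t\<close> gives
  \<open>|J\<^sub>T(\<pi>) - J\<^sub>T\<^sub>'(\<pi>)| \<le> \<delta>/(1-\<gamma>)\<^sup>2 < \<epsilon>\<close> for every policy. An exploiting pair \<open>\<pi>, \<pi>'\<close> would
  need \<open>(J\<^sub>T(\<pi>) - J\<^sub>T\<^sub>'(\<pi>)) - (J\<^sub>T(\<pi>') - J\<^sub>T\<^sub>'(\<pi>')) > 2\<epsilon>\<close>, which is impossible.\<close>

definition markov_step :: "('x::finite \<Rightarrow> real) \<Rightarrow> ('x \<Rightarrow> 'y \<Rightarrow> real) \<Rightarrow> 'y \<Rightarrow> real" where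
  "markov_step m K = (\<lambda>y. \<Sum>x\<in>UNIV. m x * K x y)"

lemma is_dist_markov_step:
  assumes "is_dist m" "\<And>x. is_dist (K x)"
  shows "is_dist (markov_step m K)"
proof -
  have "(\<Sum>y\<in>UNIV. \<Sum>x\<in>UNIV. m x * K x y) = (\<Sum>x\<in>UNIV. m x * (\<Sum>y\<in>UNIV. K x y))"
    by (subst sum.swap) (simp add: sum_distrib_left)
  also have "\<dots> = 1"
    using assms by (simp add: is_dist_def)
  finally show ?thesis
    using assms by (auto simp: is_dist_def markov_step_def intro!: sum_nonneg)
qed

lemma l1_markov_step_le:
  fixes m m' :: "'x::finite \<Rightarrow> real" and K K' :: "'x \<Rightarrow> 'y::finite \<Rightarrow> real"
  assumes K: "\<And>x. is_dist (K x)" and m': "is_dist m'"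
    and KK': "\<And>x. (\<Sum>y\<in>UNIV. \<bar>K x y - K' x y\<bar>) \<le> c"
  shows "(\<Sum>y\<in>UNIV. \<bar>markov_step m K y - markov_step m' K' y\<bar>) \<le> (\<Sum>x\<in>UNIV. \<bar>m x - m' x\<bar>) + c"
proof -
  have K_nonneg: "0 \<le> K x y" and K_sum: "(\<Sum>y\<in>UNIV. K x y) = 1" for x y
    using K by (auto simp: is_dist_def)
  have m'_nonneg: "0 \<le> m' x" and m'_sum: "(\<Sum>x\<in>UNIV. m' x) = 1" for x
    using m' by (auto simp: is_dist_def)
  have pointwise: "\<bar>markov_step m K y - markov_step m' K' y\<bar>
      \<le> (\<Sum>x\<in>UNIV. \<bar>m x - m' x\<bar> * K x y + m' x * \<bar>K x y - K' x y\<bar>)" for y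
  proof -
    have "markov_step m K y - markov_step m' K' y
        = (\<Sum>x\<in>UNIV. (m x - m' x) * K x y + m' x * (K x y - K' x y))"
      by (simp add: markov_step_def sum_subtractf[symmetric] algebra_simps)
    also have "\<bar>\<dots>\<bar> \<le> (\<Sum>x\<in>UNIV. \<bar>m x - m' x\<bar> * K x y + m' x * \<bar>K x y - K' x y\<bar>)"
      by (rule order_trans[OF sum_abs sum_mono], rule order_trans[OF abs_triangle_ineq])
        (simp add: abs_mult K_nonneg m'_nonneg)
    finally show ?thesis .
  qed
  have "(\<Sum>y\<in>UNIV. \<bar>markov_step m K y - markov_step m' K' y\<bar>)
      \<le> (\<Sum>y\<in>UNIV. \<Sum>x\<in>UNIV. \<bar>m x - m' x\<bar> * K x y + m' x * \<bar>K x y - K' x y\<bar>)"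
    by (rule sum_mono) (rule pointwise)
  also have "\<dots> = (\<Sum>x\<in>UNIV. \<bar>m x - m' x\<bar> + m' x * (\<Sum>y\<in>UNIV. \<bar>K x y - K' x y\<bar>))"
    by (subst sum.swap) (simp add: sum.distrib sum_distrib_left[symmetric] K_sum)
  also have "\<dots> \<le> (\<Sum>x\<in>UNIV. \<bar>m x - m' x\<bar> + m' x * c)"
    by (intro sum_mono add_left_mono mult_left_mono KK' m'_nonneg)
  also have "\<dots> = (\<Sum>x\<in>UNIV. \<bar>m x - m' x\<bar>) + c"
    by (simp add: sum.distrib sum_distrib_right[symmetric] m'_sum)
  finally show ?thesis .
qed

lemma dist_weighted_sum_bounds:
  assumes "is_dist m" "\<And>x. 0 \<le> f x \<and> f x \<le> 1"
  shows "0 \<le> (\<Sum>x\<in>UNIV. m x * f x) \<and> (\<Sum>x\<in>UNIV. m x * f x) \<le> 1"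
proof -
  have "(\<Sum>x\<in>UNIV. m x * f x) \<le> (\<Sum>x\<in>UNIV. m x)"
    using assms by (intro sum_mono) (simp add: is_dist_def mult_left_le)
  then show ?thesis
    using assms by (auto simp: is_dist_def intro!: sum_nonneg)
qed

lemma abs_weighted_sum_diff_le_half_l1:
  fixes m m' f :: "'x::finite \<Rightarrow> real"
  assumes "(\<Sum>x\<in>UNIV. m x) = (\<Sum>x\<in>UNIV. m' x)" "\<And>x. 0 \<le> f x \<and> f x \<le> 1"
  shows "\<bar>(\<Sum>x\<in>UNIV. m x * f x) - (\<Sum>x\<in>UNIV. m' x * f x)\<bar> \<le> (\<Sum>x\<in>UNIV. \<bar>m x - m' x\<bar>) / 2"
proof -
  \<comment> \<open>The total masses agree, so \<open>f\<close> may be recentred at \<open>1/2\<close>, where \<open>|f - 1/2| \<le> 1/2\<close>.\<close>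
  have "(\<Sum>x\<in>UNIV. m x * f x) - (\<Sum>x\<in>UNIV. m' x * f x) = (\<Sum>x\<in>UNIV. (m x - m' x) * (f x - 1/2))"
  proof -
    have "(\<Sum>x\<in>UNIV. (m x - m' x) * (f x - 1/2))
        = (\<Sum>x\<in>UNIV. m x * f x) - (\<Sum>x\<in>UNIV. m' x * f x) - ((\<Sum>x\<in>UNIV. m x) - (\<Sum>x\<in>UNIV. m' x)) / 2"
      by (simp add: sum_subtractf[symmetric] sum_divide_distrib algebra_simps)
    then show ?thesis
      using assms(1) by simp
  qed
  also have "\<bar>\<dots>\<bar> \<le> (\<Sum>x\<in>UNIV. \<bar>m x - m' x\<bar> * (1/2))"
  proof (intro order_trans[OF sum_abs sum_mono])
    fix x
    have "\<bar>f x - 1/2\<bar> \<le> 1/2"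
      using assms(2)[of x] unfolding abs_le_iff by linarith
    then show "\<bar>(m x - m' x) * (f x - 1/2)\<bar> \<le> \<bar>m x - m' x\<bar> * (1/2)"
      unfolding abs_mult by (rule mult_left_mono) simp_all
  qed
  finally show ?thesis
    by (simp add: sum_divide_distrib)
qed

lemma abs_suminf_diff_le:
  fixes f g h :: "nat \<Rightarrow> real"
  assumes "summable f" "summable g" "summable h" "\<And>n. \<bar>f n - g n\<bar> \<le> h n"
  shows "\<bar>suminf f - suminf g\<bar> \<le> suminf h"
proof -
  have abs_summable: "summable (\<lambda>n. \<bar>f n - g n\<bar>)"
    using assms(3,4) by (intro summable_rabs_comparison_test[of _ h]) auto
  have "suminf f - suminf g = (\<Sum>n. f n - g n)"
    using suminf_diff[OF assms(1,2)] by simp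
  also have "\<bar>\<dots>\<bar> \<le> (\<Sum>n. \<bar>f n - g n\<bar>)"
    using abs_summable by (rule summable_rabs)
  also have "\<dots> \<le> suminf h"
    using abs_summable assms(3,4) by (intro suminf_le)
  finally show ?thesis .
qed

lemma l1_row_le_tv_gap:
  fixes T T' :: "'s::finite \<Rightarrow> 'a::finite \<Rightarrow> 's \<Rightarrow> real"
  shows "(\<Sum>s'\<in>UNIV. \<bar>T s a s' - T' s a s'\<bar>) \<le> 2 * tv_gap T T'"
proof -
  have "{(\<Sum>s'\<in>UNIV. \<bar>T s a s' - T' s a s'\<bar>) | s a. True}
      = (\<lambda>(s, a). \<Sum>s'\<in>UNIV. \<bar>T s a s' - T' s a s'\<bar>) ` UNIV"
    by auto
  then have "(\<Sum>s'\<in>UNIV. \<bar>T s a s' - T' s a s'\<bar>)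
      \<le> Max {(\<Sum>s'\<in>UNIV. \<bar>T s a s' - T' s a s'\<bar>) | s a. True}"
    by (intro Max_ge) auto
  then show ?thesis
    by (simp add: tv_gap_def)
qed

lemma tv_gap_nonneg:
  fixes T T' :: "'s::finite \<Rightarrow> 'a::finite \<Rightarrow> 's \<Rightarrow> real"
  shows "0 \<le> tv_gap T T'"
proof -
  have "0 \<le> 2 * tv_gap T T'"
    by (rule order_trans[OF _ l1_row_le_tv_gap]) (simp add: sum_nonneg)
  then show ?thesis
    by simp
qed

definition policy_kernel ::
    "('s::finite \<Rightarrow> 'a::finite \<Rightarrow> 's \<Rightarrow> real) \<Rightarrow> (nat \<Rightarrow> 's \<Rightarrow> 'a \<Rightarrow> real) \<Rightarrow> nat \<Rightarrow> 's \<Rightarrow> 's \<Rightarrow> real" where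
  "policy_kernel T p t s = markov_step (p t s) (T s)"

lemma state_dist_Suc_markov_step:
  "state_dist d0 T p (Suc t) = markov_step (state_dist d0 T p t) (policy_kernel T p t)"
  by (simp add: markov_step_def policy_kernel_def sum_distrib_left mult.assoc)

lemma is_dist_policy_kernel:
  assumes "is_transition T" "is_policy p"
  shows "is_dist (policy_kernel T p t s)"
  using assms by (simp add: policy_kernel_def is_dist_markov_step is_transition_def is_policy_def)

lemma l1_policy_kernel_le:
  assumes "is_transition T" "is_policy p"
  shows "(\<Sum>s'\<in>UNIV. \<bar>policy_kernel T p t s s' - policy_kernel T' p t s s'\<bar>) \<le> 2 * tv_gap T T'"
  using l1_markov_step_le[where m = "p t s" and m' = "p t s" and K = "T s" and K' = "T' s"
      and c = "2 * tv_gap T T'"] assms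
  by (simp add: policy_kernel_def is_transition_def is_policy_def l1_row_le_tv_gap)

lemma is_dist_state_dist:
  assumes "is_dist d0" "is_transition T" "is_policy p"
  shows "is_dist (state_dist d0 T p t)"
  by (induction t)
    (simp_all add: assms(1) state_dist_Suc_markov_step is_dist_markov_step
      is_dist_policy_kernel[OF assms(2,3)] del: state_dist.simps(2))

lemma l1_state_dist_le:
  assumes "is_dist d0" "is_transition T" "is_transition T'" "is_policy p"
  shows "(\<Sum>s\<in>UNIV. \<bar>state_dist d0 T p t s - state_dist d0 T' p t s\<bar>) \<le> 2 * real t * tv_gap T T'"
proof (induction t)
  case 0
  then show ?case by simp
next
  case (Suc t)
  have "(\<Sum>s\<in>UNIV. \<bar>state_dist d0 T p (Suc t) s - state_dist d0 T' p (Suc t) s\<bar>)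
      \<le> (\<Sum>s\<in>UNIV. \<bar>state_dist d0 T p t s - state_dist d0 T' p t s\<bar>) + 2 * tv_gap T T'"
    unfolding state_dist_Suc_markov_step
    using assms by (intro l1_markov_step_le is_dist_policy_kernel is_dist_state_dist l1_policy_kernel_le)
  with Suc show ?case
    by (simp add: algebra_simps)
qed

definition policy_reward ::
    "('s::finite \<Rightarrow> 'a::finite \<Rightarrow> real) \<Rightarrow> (nat \<Rightarrow> 's \<Rightarrow> 'a \<Rightarrow> real) \<Rightarrow> nat \<Rightarrow> 's \<Rightarrow> real" where
  "policy_reward R p t s = (\<Sum>a\<in>UNIV. p t s a * R s a)"

definition expected_reward ::
    "('s::finite \<Rightarrow> real) \<Rightarrow> ('s \<Rightarrow> 'a::finite \<Rightarrow> real) \<Rightarrow> ('s \<Rightarrow> 'a \<Rightarrow> 's \<Rightarrow> real)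
      \<Rightarrow> (nat \<Rightarrow> 's \<Rightarrow> 'a \<Rightarrow> real) \<Rightarrow> nat \<Rightarrow> real" where
  "expected_reward d0 R T p t = (\<Sum>s\<in>UNIV. state_dist d0 T p t s * policy_reward R p t s)"

lemma J_eq_suminf_expected_reward:
  "J d0 R \<gamma> T p = (\<Sum>t. \<gamma> ^ t * expected_reward d0 R T p t)"
  by (simp add: J_def expected_reward_def policy_reward_def sum_distrib_left mult.assoc)

lemma policy_reward_bounds:
  assumes "is_policy p" "\<forall>s a. 0 \<le> R s a \<and> R s a \<le> 1"
  shows "0 \<le> policy_reward R p t s \<and> policy_reward R p t s \<le> 1"
  using assms unfolding policy_reward_def is_policy_def by (intro dist_weighted_sum_bounds) auto

lemma expected_reward_bounds:
  assumes "is_dist d0" "is_transition T" "is_policy p" "\<forall>s a. 0 \<le> R s a \<and> R s a \<le> 1"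
  shows "0 \<le> expected_reward d0 R T p t \<and> expected_reward d0 R T p t \<le> 1"
  unfolding expected_reward_def
  using assms by (intro dist_weighted_sum_bounds is_dist_state_dist policy_reward_bounds)

lemma expected_reward_diff_le:
  assumes "is_dist d0" "is_transition T" "is_transition T'" "is_policy p"
    "\<forall>s a. 0 \<le> R s a \<and> R s a \<le> 1"
  shows "\<bar>expected_reward d0 R T p t - expected_reward d0 R T' p t\<bar> \<le> real t * tv_gap T T'"
proof -
  have "(\<Sum>s\<in>UNIV. state_dist d0 T p t s) = (\<Sum>s\<in>UNIV. state_dist d0 T' p t s)"
    using is_dist_state_dist assms by (metis is_dist_def)
  then have "\<bar>expected_reward d0 R T p t - expected_reward d0 R T' p t\<bar>
      \<le> (\<Sum>s\<in>UNIV. \<bar>state_dist d0 T p t s - state_dist d0 T' p t s\<bar>) / 2"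
    unfolding expected_reward_def
    using assms(4,5) by (intro abs_weighted_sum_diff_le_half_l1 policy_reward_bounds)
  also have "\<dots> \<le> real t * tv_gap T T'"
    using l1_state_dist_le[OF assms(1-4), of t] by simp
  finally show ?thesis .
qed

lemma J_diff_le:
  assumes "is_dist d0" "is_transition T" "is_transition T'" "is_policy p"
    "\<forall>s a. 0 \<le> R s a \<and> R s a \<le> 1" "0 \<le> \<gamma>" "\<gamma> < 1"
  shows "\<bar>J d0 R \<gamma> T p - J d0 R \<gamma> T' p\<bar> \<le> tv_gap T T' / (1 - \<gamma>)\<^sup>2"
proof -
  have summable_J: "summable (\<lambda>t. \<gamma> ^ t * expected_reward d0 R T'' p t)" if "is_transition T''" for T''
  proof (rule summable_comparison_test[of _ "\<lambda>t. \<gamma> ^ t"])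
    show "summable (\<lambda>t. \<gamma> ^ t)"
      using assms(6,7) by (simp add: summable_geometric)
    show "\<exists>N. \<forall>t\<ge>N. norm (\<gamma> ^ t * expected_reward d0 R T'' p t) \<le> \<gamma> ^ t"
      using expected_reward_bounds[OF assms(1) that assms(4,5)] assms(6)
      by (auto simp: abs_mult intro!: mult_left_le)
  qed
  \<comment> \<open>\<open>\<Sum> (t+1) \<gamma>\<^sup>t = 1/(1-\<gamma>)\<^sup>2\<close>: differentiate the geometric series.\<close>
  have bound_sums: "(\<lambda>t. tv_gap T T' * (of_nat (Suc t) * \<gamma> ^ t)) sums (tv_gap T T' / (1 - \<gamma>)\<^sup>2)"
    using sums_mult[OF geometric_deriv_sums[of \<gamma>], of "tv_gap T T'"] assms(6,7) by simp
  have "\<bar>\<gamma> ^ t * expected_reward d0 R T p t - \<gamma> ^ t * expected_reward d0 R T' p t\<bar>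
      \<le> tv_gap T T' * (of_nat (Suc t) * \<gamma> ^ t)" for t
  proof -
    have "\<bar>\<gamma> ^ t * expected_reward d0 R T p t - \<gamma> ^ t * expected_reward d0 R T' p t\<bar>
        = \<gamma> ^ t * \<bar>expected_reward d0 R T p t - expected_reward d0 R T' p t\<bar>"
      using assms(6) by (simp add: abs_mult right_diff_distrib[symmetric])
    also have "\<dots> \<le> \<gamma> ^ t * (real t * tv_gap T T')"
      using expected_reward_diff_le[OF assms(1-5)] assms(6) by (simp add: mult_left_mono)
    also have "\<dots> \<le> tv_gap T T' * (of_nat (Suc t) * \<gamma> ^ t)"
      using tv_gap_nonneg[of T T'] assms(6) by (simp add: algebra_simps)
    finally show ?thesis .
  qed
  then show ?thesis
    unfolding J_eq_suminf_expected_reward sums_unique[OF bound_sums]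
    using assms(2,3) sums_summable[OF bound_sums] by (intro abs_suminf_diff_le summable_J)
qed

lemma unexploitable_if_J_close:
  assumes "\<And>p. p \<in> PS \<Longrightarrow> \<bar>J d0 R \<gamma> T p - J d0 R \<gamma> T' p\<bar> \<le> \<epsilon>"
  shows "unexploitable d0 R \<gamma> \<epsilon> PS T T'"
  unfolding unexploitable_def exploitable_def
proof clarify
  fix p p' assume "p \<in> PS" "p' \<in> PS"
    and "J d0 R \<gamma> T p - J d0 R \<gamma> T p' > \<epsilon>" "J d0 R \<gamma> T' p' - J d0 R \<gamma> T' p > \<epsilon>"
  with assms[of p] assms[of p'] show False
    by (simp add: abs_le_iff)
qed

theorem mainTheorem15:
  fixes d0 :: "'s::finite \<Rightarrow> real" and R :: "'s \<Rightarrow> 'a::finite \<Rightarrow> real"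
    and \<gamma> \<epsilon> :: real and T T' :: "'s \<Rightarrow> 'a \<Rightarrow> 's \<Rightarrow> real"
  assumes "is_dist d0"
    and "0 \<le> \<gamma>" and "\<gamma> < 1"
    and "\<forall>s a. 0 \<le> R s a \<and> R s a \<le> 1"
    and "is_transition T" and "is_transition T'"
    and "tv_gap T T' > 0"
    and "\<epsilon> > 0"
    and "1 / (1 - \<gamma>) < sqrt (\<epsilon> / tv_gap T T')"
  shows "\<forall>PS. (\<forall>p\<in>PS. is_policy p) \<longrightarrow> unexploitable d0 R \<gamma> \<epsilon> PS T T'"
proof (intro allI impI)
  fix PS :: "(nat \<Rightarrow> 's \<Rightarrow> 'a \<Rightarrow> real) set"
  assume policies: "\<forall>p\<in>PS. is_policy p"
  have "(1 / (1 - \<gamma>))\<^sup>2 < (sqrt (\<epsilon> / tv_gap T T'))\<^sup>2"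
    using assms(3,9) by (intro power_strict_mono) auto
  then have "tv_gap T T' / (1 - \<gamma>)\<^sup>2 < \<epsilon>"
    using assms(7,8) by (simp add: power_divide field_simps)
  moreover have "\<bar>J d0 R \<gamma> T p - J d0 R \<gamma> T' p\<bar> \<le> tv_gap T T' / (1 - \<gamma>)\<^sup>2" if "p \<in> PS" for p
    using policies that assms(1-6) by (intro J_diff_le) auto
  ultimately show "unexploitable d0 R \<gamma> \<epsilon> PS T T'"
    by (intro unexploitable_if_J_close) fastforce
qed

end
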